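(* Let $n\in\mathbb{Z}$ with $|n|\geq1$, $\alpha>0$, $R>0$, $\kappa\in\mathbb{R}$. An element $u\in H$ is a nontrivial critical point of $\mathcal{I}_\kappa$ if and only if $u\in\mathcal{M}$ and $u$ is a critical point of the restriction $\mathcal{I}_\kappa|_{\mathcal{M}}$.
   Context: $H$ is the completion of $\{u\in C^1[0,R]: u(0)=0=u(R)\}$ with respect to the inner product $(u,\tilde u)=\int_0^R\{ru_r\tilde u_r+\frac1r u\tilde u\}dr$. $\mathcal{I}_\kappa(u)=\frac12\int_0^R\{ru_r^2+\frac{n^2}{r}u^2-2(\alpha^{-1}-\kappa)ru^2+2\alpha^{-2}r\ln(1+\alpha u^2)\}dr$, a $C^1$ (indeed $C^3$) functional on $H$. Define $\gamma_\kappa(u)=\frac12\langle \mathcal{I}_\kappa'(u),u\rangle=\frac12\int_0^R\{ru_r^2+\frac{n^2}{r}u^2-2(\alpha^{-1}-\kappa)ru^2+2\alpha^{-1}\frac{ru^2}{1+\alpha u^2}\}dr$ and the Nehari manifold $\mathcal{M}=\{u\in H\setminus\{0\}:\gamma_\kappa(u)=0\}$. A critical point of $\mathcal{I}_\kappa|_{\mathcal{M}}$ is a point $u\in\mathcal{M}$ for which there is $\xi\in\mathbb{R}$ with $\mathcal{I}_\kappa'(u)=\xi\gamma_\kappa'(u)$ in $H^{-1}$. *)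

theory Defs
  imports "HOL-Analysis.Analysis"
begin

text \<open>An element of H is represented by a pair (u, v) of real functions on [0,R]:
  u is the function and v its (generalised) derivative u_r.  H is realised as the
  completion of the C^1 functions on [0,R] vanishing at 0 and R with respect to the
  norm induced by the inner product (u,w) = integral of r u_r w_r + u w / r.\<close>

type_synonym hpt = "(real \<Rightarrow> real) \<times> (real \<Rightarrow> real)"

definition C1_van :: "real \<Rightarrow> (real \<Rightarrow> real) \<Rightarrow> (real \<Rightarrow> real) \<Rightarrow> bool" where
  "C1_van R w w' \<longleftrightarrow>
     (\<forall>r\<in>{0..R}. (w has_real_derivative w' r) (at r within {0..R})) \<and>
     continuous_on {0..R} w' \<and> w 0 = 0 \<and> w R = 0"

definition Hip :: "real \<Rightarrow> hpt \<Rightarrow> hpt \<Rightarrow> real" where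
  "Hip R p q = integral {0..R} (\<lambda>r. r * snd p r * snd q r + fst p r * fst q r / r)"

definition Hnorm :: "real \<Rightarrow> hpt \<Rightarrow> real" where
  "Hnorm R p = sqrt (Hip R p p)"

definition padd :: "hpt \<Rightarrow> hpt \<Rightarrow> hpt" where
  "padd p q = ((\<lambda>r. fst p r + fst q r), (\<lambda>r. snd p r + snd q r))"

definition pscale :: "real \<Rightarrow> hpt \<Rightarrow> hpt" where
  "pscale c p = ((\<lambda>r. c * fst p r), (\<lambda>r. c * snd p r))"

definition Hsp :: "real \<Rightarrow> hpt set" where
  "Hsp R = {(u, v). (\<lambda>r. r * (v r)\<^sup>2) integrable_on {0..R} \<and>
      (\<lambda>r. (u r)\<^sup>2 / r) integrable_on {0..R} \<and>
      (\<exists>w w'. (\<forall>k. C1_van R (w k) (w' k)) \<and>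
         (\<forall>k. (\<lambda>r. r * (w' k r - v r)\<^sup>2 + (w k r - u r)\<^sup>2 / r) integrable_on {0..R}) \<and>
         ((\<lambda>k. integral {0..R} (\<lambda>r. r * (w' k r - v r)\<^sup>2 + (w k r - u r)\<^sup>2 / r))
            \<longlonglongrightarrow> 0))}"

definition Hdual :: "real \<Rightarrow> (hpt \<Rightarrow> real) \<Rightarrow> bool" where
  "Hdual R L \<longleftrightarrow>
     (\<forall>p\<in>Hsp R. \<forall>q\<in>Hsp R. L (padd p q) = L p + L q) \<and>
     (\<forall>p\<in>Hsp R. \<forall>c. L (pscale c p) = c * L p) \<and>
     (\<exists>C. \<forall>p\<in>Hsp R. \<bar>L p\<bar> \<le> C * Hnorm R p)"

definition has_H_deriv :: "real \<Rightarrow> (hpt \<Rightarrow> real) \<Rightarrow> hpt \<Rightarrow> (hpt \<Rightarrow> real) \<Rightarrow> bool" where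
  "has_H_deriv R F p L \<longleftrightarrow> Hdual R L \<and>
     (\<forall>\<epsilon>>0. \<exists>\<delta>>0. \<forall>q\<in>Hsp R. Hnorm R q < \<delta> \<longrightarrow>
         \<bar>F (padd p q) - F p - L q\<bar> \<le> \<epsilon> * Hnorm R q)"

definition Ikappa :: "int \<Rightarrow> real \<Rightarrow> real \<Rightarrow> real \<Rightarrow> hpt \<Rightarrow> real" where
  "Ikappa n \<alpha> \<kappa> R p = 1/2 * integral {0..R} (\<lambda>r.
      r * (snd p r)\<^sup>2 + (real_of_int n)\<^sup>2 / r * (fst p r)\<^sup>2
      - 2 * (1/\<alpha> - \<kappa>) * r * (fst p r)\<^sup>2
      + 2 * \<alpha> powi (-2) * r * ln (1 + \<alpha> * (fst p r)\<^sup>2))"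

definition gammak :: "int \<Rightarrow> real \<Rightarrow> real \<Rightarrow> real \<Rightarrow> hpt \<Rightarrow> real" where
  "gammak n \<alpha> \<kappa> R p = 1/2 * integral {0..R} (\<lambda>r.
      r * (snd p r)\<^sup>2 + (real_of_int n)\<^sup>2 / r * (fst p r)\<^sup>2
      - 2 * (1/\<alpha> - \<kappa>) * r * (fst p r)\<^sup>2
      + 2 * (1/\<alpha>) * r * (fst p r)\<^sup>2 / (1 + \<alpha> * (fst p r)\<^sup>2))"

definition Nehari :: "int \<Rightarrow> real \<Rightarrow> real \<Rightarrow> real \<Rightarrow> hpt set" where
  "Nehari n \<alpha> \<kappa> R = {p \<in> Hsp R. Hnorm R p \<noteq> 0 \<and> gammak n \<alpha> \<kappa> R p = 0}"

definition H_critical :: "real \<Rightarrow> (hpt \<Rightarrow> real) \<Rightarrow> hpt \<Rightarrow> bool" where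
  "H_critical R F p \<longleftrightarrow> p \<in> Hsp R \<and>
     (\<exists>L. has_H_deriv R F p L \<and> (\<forall>q\<in>Hsp R. L q = 0))"

definition M_critical :: "real \<Rightarrow> hpt set \<Rightarrow> (hpt \<Rightarrow> real) \<Rightarrow> (hpt \<Rightarrow> real) \<Rightarrow> hpt \<Rightarrow> bool" where
  "M_critical R M F G p \<longleftrightarrow> p \<in> M \<and>
     (\<exists>L K \<xi>. has_H_deriv R F p L \<and> has_H_deriv R G p K \<and>
        (\<forall>q\<in>Hsp R. L q = \<xi> * K q))"

end

theory Submission
  imports Defs
begin

text \<open>Both \<open>I\<^sub>\<kappa>\<close> and \<open>\<gamma>\<^sub>\<kappa>\<close> have the form
  \<open>1/2 \<integral> (r u\<^sub>r\<^sup>2 + c u\<^sup>2/r - 2b r u\<^sup>2 + 2r G(u)) dr\<close> with \<open>G(0) = G'(0) = 0\<close> and \<open>G''\<close> bounded,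
  namely \<open>G(s) = \<alpha>\<^sup>-\<^sup>2 ln(1 + \<alpha>s\<^sup>2)\<close> and \<open>G(s) = \<alpha>\<^sup>-\<^sup>1 s\<^sup>2/(1 + \<alpha>s\<^sup>2)\<close>. A second-order Taylor bound
  on the integrand, weighted exactly like the norm of H, makes such a functional Frechet
  differentiable with the expected derivative. Since
  \<open>s (\<alpha>\<^sup>-\<^sup>2 ln(1 + \<alpha>s\<^sup>2))' = 2\<alpha>\<^sup>-\<^sup>1 s\<^sup>2/(1 + \<alpha>s\<^sup>2)\<close>, we get \<open>I\<^sub>\<kappa>'(u)u = 2\<gamma>\<^sub>\<kappa>(u)\<close>, so nontrivial
  critical points lie on the Nehari manifold. Conversely, on the Nehari manifold
  \<open>\<gamma>\<^sub>\<kappa>'(u)u = -\<integral> 2r u\<^sup>4/(1 + \<alpha>u\<^sup>2)\<^sup>2 dr < 0\<close>, so testing \<open>I\<^sub>\<kappa>'(u) = \<xi> \<gamma>\<^sub>\<kappa>'(u)\<close> against \<open>u\<close>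
  forces \<open>\<xi> = 0\<close>.\<close>

section \<open>Measurability of elements of H\<close>

lemma tendsto_zero_of_weighted_squares:
  fixes x :: real and f g :: "nat \<Rightarrow> real"
  assumes x: "x > 0" and lim: "(\<lambda>k. x * (f k)\<^sup>2 + (g k)\<^sup>2 / x) \<longlonglongrightarrow> 0"
  shows "f \<longlonglongrightarrow> 0" "g \<longlonglongrightarrow> 0"
proof -
  have square_dominated: "h \<longlonglongrightarrow> 0" if "\<And>k. (h k)\<^sup>2 \<le> e k" "e \<longlonglongrightarrow> 0" for h e :: "nat \<Rightarrow> real"
  proof -
    have "(\<lambda>k. (h k)\<^sup>2) \<longlonglongrightarrow> 0"
      by (rule tendsto_sandwich[of "\<lambda>_. 0" _ _ e]) (use that in auto)
    then have "(\<lambda>k. sqrt ((h k)\<^sup>2)) \<longlonglongrightarrow> 0" using tendsto_real_sqrt by fastforce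
    then show ?thesis by (simp add: tendsto_rabs_zero_iff)
  qed
  show "f \<longlonglongrightarrow> 0"
    by (rule square_dominated[OF _ tendsto_divide_zero[OF lim, of x]]) (use x in \<open>simp add: field_simps\<close>)
  show "g \<longlonglongrightarrow> 0"
    by (rule square_dominated[OF _ tendsto_mult_right_zero[OF lim, of x]]) (use x in \<open>simp add: field_simps\<close>)
qed

lemma C1_van_continuous:
  assumes "C1_van R w w'"
  shows "continuous_on {0..R} w" "continuous_on {0..R} w'"
  using assms unfolding C1_van_def
  by (auto intro!: DERIV_continuous continuous_at_imp_continuous_on simp: continuous_on_eq_continuous_within)

lemma Hsp_approximants_converge_ae:
  assumes "(u, v) \<in> Hsp R"
  obtains w w' N where "\<And>k. C1_van R (w k) (w' k)" "negligible N"
    "\<And>x. x \<in> {0..R} - N \<Longrightarrow> (\<lambda>k. w k x) \<longlonglongrightarrow> u x \<and> (\<lambda>k. w' k x) \<longlonglongrightarrow> v x"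
proof -
  define S where "S = {0..R}"
  from assms obtain w w' where C: "\<And>k. C1_van R (w k) (w' k)"
    and I: "\<And>k. (\<lambda>r. r * (w' k r - v r)\<^sup>2 + (w k r - u r)\<^sup>2 / r) integrable_on S"
    and T: "(\<lambda>k. integral S (\<lambda>r. r * (w' k r - v r)\<^sup>2 + (w k r - u r)\<^sup>2 / r)) \<longlonglongrightarrow> 0"
    unfolding Hsp_def S_def by auto
  define d where "d k r = r * (w' k r - v r)\<^sup>2 + (w k r - u r)\<^sup>2 / r" for k r
  have d_nonneg: "0 \<le> d k r" if "r \<in> S" for k r using that by (auto simp: d_def S_def)
  have d_int: "integrable (lebesgue_on S) (d k)" for k
    using I[of k] d_nonneg unfolding d_def
    by (intro absolutely_integrable_imp_integrable nonnegative_absolutely_integrable_1) (auto simp: S_def)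
  have L1_eq: "(\<integral>x. norm (d k x) \<partial>lebesgue_on S) = integral S (d k)" for k
  proof -
    have "(\<integral>x. norm (d k x) \<partial>lebesgue_on S) = (\<integral>x. d k x \<partial>lebesgue_on S)"
      by (rule Bochner_Integration.integral_cong) (auto simp: d_nonneg)
    then show ?thesis using d_int[of k] by (simp add: lebesgue_integral_eq_integral S_def)
  qed
  have "(\<lambda>k. (\<integral>x. norm (d k x) \<partial>lebesgue_on S)) \<longlonglongrightarrow> 0"
    unfolding L1_eq using T unfolding d_def .
  from tendsto_L1_AE_subseq[OF d_int this] obtain s where
    "AE x in lebesgue_on S. (\<lambda>k. d (s k) x) \<longlonglongrightarrow> 0" by blast
  then obtain N where N: "N \<in> null_sets (lebesgue_on S)"
    and NN: "{x \<in> space (lebesgue_on S). \<not> (\<lambda>k. d (s k) x) \<longlonglongrightarrow> 0} \<subseteq> N"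
    unfolding eventually_ae_filter by blast
  show thesis
  proof
    show "C1_van R (w (s k)) (w' (s k))" for k by (rule C)
    show "negligible (N \<union> {0})"
      using N by (auto simp: S_def null_sets_restrict_space negligible_iff_null_sets)
    fix x assume x: "x \<in> {0..R} - (N \<union> {0})"
    then have pos: "x > 0" by auto
    have "(\<lambda>k. x * (w' (s k) x - v x)\<^sup>2 + (w (s k) x - u x)\<^sup>2 / x) \<longlonglongrightarrow> 0"
      using NN x by (auto simp: d_def S_def)
    from tendsto_zero_of_weighted_squares[OF pos this]
    show "(\<lambda>k. w (s k) x) \<longlonglongrightarrow> u x \<and> (\<lambda>k. w' (s k) x) \<longlonglongrightarrow> v x" by (simp add: LIM_zero_iff)
  qed
qed

lemma Hsp_measurable:
  assumes "p \<in> Hsp R"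
  shows "fst p \<in> borel_measurable (lebesgue_on {0..R})" "snd p \<in> borel_measurable (lebesgue_on {0..R})"
proof -
  obtain u v where p: "p = (u, v)" by (cases p)
  with assms obtain w w' N where C: "\<And>k. C1_van R (w k) (w' k)" and N: "negligible N"
    and lim: "\<And>x. x \<in> {0..R} - N \<Longrightarrow> (\<lambda>k. w k x) \<longlonglongrightarrow> u x \<and> (\<lambda>k. w' k x) \<longlonglongrightarrow> v x"
    using Hsp_approximants_converge_ae by blast
  have meas: "w k measurable_on {0..R}" "w' k measurable_on {0..R}" for k
    using C1_van_continuous[OF C[of k]] continuous_imp_measurable_on_sets_lebesgue[of "{0..R}"]
      measurable_on_iff_borel_measurable[of "{0..R}"] by auto
  have "u measurable_on {0..R}" by (rule measurable_on_limit[where f = w, OF meas(1) N]) (use lim in blast)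
  moreover have "v measurable_on {0..R}" by (rule measurable_on_limit[where f = w', OF meas(2) N]) (use lim in blast)
  ultimately show "fst p \<in> borel_measurable (lebesgue_on {0..R})" "snd p \<in> borel_measurable (lebesgue_on {0..R})"
    unfolding p using measurable_on_iff_borel_measurable[of "{0..R}"] by auto
qed

section \<open>The norm of H and scaling\<close>

definition Hdens :: "hpt \<Rightarrow> real \<Rightarrow> real" where
  "Hdens p r = r * (snd p r)\<^sup>2 + (fst p r)\<^sup>2 / r"

lemma Hdens_nonneg: "0 \<le> r \<Longrightarrow> 0 \<le> Hdens p r"
  by (simp add: Hdens_def)

lemma Hdens_integrable: "p \<in> Hsp R \<Longrightarrow> Hdens p integrable_on {0..R}"
  unfolding Hdens_def by (rule integrable_add) (auto simp: Hsp_def)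

lemma Hip_self_eq_integral_Hdens: "Hip R p p = integral {0..R} (Hdens p)"
  unfolding Hip_def Hdens_def by (rule integral_cong) (simp add: power2_eq_square)

lemma Hip_self_nonneg: "p \<in> Hsp R \<Longrightarrow> 0 \<le> Hip R p p"
  unfolding Hip_self_eq_integral_Hdens
  by (rule integral_nonneg[OF Hdens_integrable]) (auto simp: Hdens_nonneg)

lemma Hnorm_nonneg: "p \<in> Hsp R \<Longrightarrow> 0 \<le> Hnorm R p"
  by (simp add: Hnorm_def Hip_self_nonneg)

lemma Hnorm_square: "p \<in> Hsp R \<Longrightarrow> (Hnorm R p)\<^sup>2 = integral {0..R} (Hdens p)"
  using Hip_self_nonneg by (simp add: Hnorm_def Hip_self_eq_integral_Hdens)

lemma C1_van_scale: "C1_van R w w' \<Longrightarrow> C1_van R (\<lambda>r. t * w r) (\<lambda>r. t * w' r)"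
  unfolding C1_van_def by (auto intro!: DERIV_cmult continuous_intros)

lemma pscale_Hsp:
  assumes "p \<in> Hsp R" shows "pscale t p \<in> Hsp R"
proof -
  obtain u v where p: "p = (u, v)" by (cases p)
  from assms obtain w w' where C: "\<And>k. C1_van R (w k) (w' k)"
    and I: "\<And>k. (\<lambda>r. r * (w' k r - v r)\<^sup>2 + (w k r - u r)\<^sup>2 / r) integrable_on {0..R}"
    and T: "(\<lambda>k. integral {0..R} (\<lambda>r. r * (w' k r - v r)\<^sup>2 + (w k r - u r)\<^sup>2 / r)) \<longlonglongrightarrow> 0"
    and i1: "(\<lambda>r. r * (v r)\<^sup>2) integrable_on {0..R}" and i2: "(\<lambda>r. (u r)\<^sup>2 / r) integrable_on {0..R}"
    unfolding Hsp_def p by auto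
  have err: "r * (t * w' k r - t * v r)\<^sup>2 + (t * w k r - t * u r)\<^sup>2 / r
      = t\<^sup>2 * (r * (w' k r - v r)\<^sup>2 + (w k r - u r)\<^sup>2 / r)" for k r
    by (simp add: power2_eq_square algebra_simps add_divide_distrib diff_divide_distrib)
  have "(\<lambda>r. r * (t * v r)\<^sup>2) = (\<lambda>r. t\<^sup>2 * (r * (v r)\<^sup>2))"
    "(\<lambda>r. (t * u r)\<^sup>2 / r) = (\<lambda>r. t\<^sup>2 * ((u r)\<^sup>2 / r))"
    by (simp_all add: fun_eq_iff power_mult_distrib)
  then have i: "(\<lambda>r. r * (t * v r)\<^sup>2) integrable_on {0..R}" "(\<lambda>r. (t * u r)\<^sup>2 / r) integrable_on {0..R}"
    using integrable_on_mult_right[OF i1] integrable_on_mult_right[OF i2] by simp_all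
  have "(\<lambda>k. integral {0..R} (\<lambda>r. r * (t * w' k r - t * v r)\<^sup>2 + (t * w k r - t * u r)\<^sup>2 / r)) \<longlonglongrightarrow> 0"
    unfolding err integral_mult_right by (rule tendsto_mult_right_zero[OF T])
  moreover have "(\<lambda>r. r * (t * w' k r - t * v r)\<^sup>2 + (t * w k r - t * u r)\<^sup>2 / r) integrable_on {0..R}" for k
    unfolding err by (rule integrable_on_mult_right[OF I])
  ultimately have "\<exists>w w'. (\<forall>k. C1_van R (w k) (w' k)) \<and>
      (\<forall>k. (\<lambda>r. r * (w' k r - t * v r)\<^sup>2 + (w k r - t * u r)\<^sup>2 / r) integrable_on {0..R}) \<and>
      (\<lambda>k. integral {0..R} (\<lambda>r. r * (w' k r - t * v r)\<^sup>2 + (w k r - t * u r)\<^sup>2 / r)) \<longlonglongrightarrow> 0"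
    using C1_van_scale[OF C]
    by (intro exI[of _ "\<lambda>k r. t * w k r"] exI[of _ "\<lambda>k r. t * w' k r"]) simp
  with i show ?thesis unfolding Hsp_def p pscale_def by simp
qed

lemma Hnorm_pscale: "Hnorm R (pscale t p) = \<bar>t\<bar> * Hnorm R p"
proof -
  have "r * (t * snd p r) * (t * snd p r) + t * fst p r * (t * fst p r) / r
      = t\<^sup>2 * (r * snd p r * snd p r + fst p r * fst p r / r)" for r
    by (simp add: power2_eq_square algebra_simps add_divide_distrib)
  then have "Hip R (pscale t p) (pscale t p) = t\<^sup>2 * Hip R p p"
    unfolding Hip_def pscale_def by simp
  then show ?thesis unfolding Hnorm_def by (simp add: real_sqrt_mult)
qed

section \<open>Frechet derivatives on H\<close>

lemma nonpos_if_le_all_pos: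
  fixes x C :: real
  assumes "\<And>e. e > 0 \<Longrightarrow> x \<le> e * C"
  shows "x \<le> 0"
proof (rule field_le_epsilon)
  fix e :: real assume e: "e > 0"
  have "x \<le> e / (\<bar>C\<bar> + 1) * C" using e by (intro assms) simp
  also have "\<dots> \<le> e / (\<bar>C\<bar> + 1) * (\<bar>C\<bar> + 1)" using e by (intro mult_left_mono) auto
  finally show "x \<le> 0 + e" by simp
qed

lemma homogeneous_quadratic_bound_imp_bounded:
  assumes hom: "\<And>q t. q \<in> Hsp R \<Longrightarrow> L (pscale t q) = t * L q"
    and bound: "\<And>q. q \<in> Hsp R \<Longrightarrow> \<bar>L q\<bar> \<le> A + B * (Hnorm R q)\<^sup>2"
  shows "\<exists>C. \<forall>q\<in>Hsp R. \<bar>L q\<bar> \<le> C * Hnorm R q"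
proof (intro exI ballI)
  fix q assume q: "q \<in> Hsp R"
  have scaled: "t * \<bar>L q\<bar> \<le> A + B * t\<^sup>2 * (Hnorm R q)\<^sup>2" if "t > 0" for t
    using bound[OF pscale_Hsp[OF q, of t]] hom[OF q, of t] that
    by (simp add: Hnorm_pscale abs_mult power_mult_distrib)
  show "\<bar>L q\<bar> \<le> (A + B) * Hnorm R q"
  proof (cases "Hnorm R q = 0")
    case True
    have "\<bar>L q\<bar> \<le> 0"
    proof (rule nonpos_if_le_all_pos)
      fix e :: real assume "e > 0"
      then show "\<bar>L q\<bar> \<le> e * A" using scaled[of "1 / e"] True by (simp add: field_simps)
    qed
    then show ?thesis using True by simp
  next
    case False
    then have pos: "Hnorm R q > 0" using Hnorm_nonneg[OF q] by simp
    then show ?thesis using scaled[of "1 / Hnorm R q"] by (simp add: field_simps power2_eq_square)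
  qed
qed

lemma has_H_deriv_unique:
  assumes F1: "has_H_deriv R F p L1" and F2: "has_H_deriv R F p L2" and q: "q \<in> Hsp R"
  shows "L1 q = L2 q"
proof -
  have hom: "L1 (pscale t q) = t * L1 q" "L2 (pscale t q) = t * L2 q" for t
    using F1 F2 q unfolding has_H_deriv_def Hdual_def by auto
  have "\<bar>L1 q - L2 q\<bar> \<le> e * (2 * Hnorm R q)" if e: "e > 0" for e
  proof -
    obtain d1 where d1: "d1 > 0" "\<And>q. q \<in> Hsp R \<Longrightarrow> Hnorm R q < d1 \<Longrightarrow> \<bar>F (padd p q) - F p - L1 q\<bar> \<le> e * Hnorm R q"
      using F1 e unfolding has_H_deriv_def by meson
    obtain d2 where d2: "d2 > 0" "\<And>q. q \<in> Hsp R \<Longrightarrow> Hnorm R q < d2 \<Longrightarrow> \<bar>F (padd p q) - F p - L2 q\<bar> \<le> e * Hnorm R q"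
      using F2 e unfolding has_H_deriv_def by meson
    define t where "t = min d1 d2 / (2 * (Hnorm R q + 1))"
    have t: "t > 0" using d1 d2 Hnorm_nonneg[OF q] by (simp add: t_def)
    have "Hnorm R q / (2 * (Hnorm R q + 1)) < 1"
      using Hnorm_nonneg[OF q] by (simp add: field_simps)
    then have "min d1 d2 * (Hnorm R q / (2 * (Hnorm R q + 1))) < min d1 d2 * 1"
      using d1 d2 by (intro mult_strict_left_mono) auto
    then have "t * Hnorm R q < min d1 d2" by (simp add: t_def)
    then have small: "Hnorm R (pscale t q) < d1" "Hnorm R (pscale t q) < d2"
      using t by (simp_all add: Hnorm_pscale)
    have "t * \<bar>L1 q - L2 q\<bar> = \<bar>L1 (pscale t q) - L2 (pscale t q)\<bar>"
      using t by (simp add: hom abs_mult right_diff_distrib[symmetric])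
    also have "\<dots> \<le> 2 * e * Hnorm R (pscale t q)"
      using d1(2)[OF pscale_Hsp[OF q] small(1)] d2(2)[OF pscale_Hsp[OF q] small(2)] by linarith
    also have "\<dots> = t * (e * (2 * Hnorm R q))" using t by (simp add: Hnorm_pscale)
    finally show ?thesis using t by simp
  qed
  then have "\<bar>L1 q - L2 q\<bar> \<le> 0" by (rule nonpos_if_le_all_pos)
  then show ?thesis by simp
qed

lemma quadratic_remainder_imp_has_H_deriv:
  assumes "Hdual R L" "0 \<le> C"
    and remainder: "\<And>q. q \<in> Hsp R \<Longrightarrow> \<bar>F (padd p q) - F p - L q\<bar> \<le> C * (Hnorm R q)\<^sup>2"
  shows "has_H_deriv R F p L"
  unfolding has_H_deriv_def
proof (intro conjI assms allI impI)
  fix e :: real assume e: "e > 0"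
  show "\<exists>\<delta>>0. \<forall>q\<in>Hsp R. Hnorm R q < \<delta> \<longrightarrow> \<bar>F (padd p q) - F p - L q\<bar> \<le> e * Hnorm R q"
  proof (intro exI[of _ "e / (C + 1)"] conjI ballI impI)
    show "e / (C + 1) > 0" using e \<open>0 \<le> C\<close> by simp
    fix q assume q: "q \<in> Hsp R" and small: "Hnorm R q < e / (C + 1)"
    have "C * Hnorm R q \<le> e"
      using small \<open>0 \<le> C\<close> Hnorm_nonneg[OF q] by (simp add: field_simps)
    then have "C * (Hnorm R q)\<^sup>2 \<le> e * Hnorm R q"
      using Hnorm_nonneg[OF q] by (simp add: power2_eq_square mult.assoc[symmetric] mult_right_mono)
    with remainder[OF q] show "\<bar>F (padd p q) - F p - L q\<bar> \<le> e * Hnorm R q" by linarith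
  qed
qed

section \<open>Nonlinearities with bounded second derivative\<close>

lemma Lipschitz_of_bounded_deriv:
  fixes f f' :: "real \<Rightarrow> real"
  assumes "\<And>x. (f has_real_derivative f' x) (at x)" and "\<And>x. \<bar>f' x\<bar> \<le> M"
  shows "\<bar>f x - f y\<bar> \<le> M * \<bar>x - y\<bar>"
  using field_differentiable_bound[of UNIV f f' M x y] assms by auto

lemma second_order_remainder_bound:
  fixes G G' G'' :: "real \<Rightarrow> real"
  assumes G': "\<And>x. (G has_real_derivative G' x) (at x)"
    and G'': "\<And>x. (G' has_real_derivative G'' x) (at x)" and bound: "\<And>x. \<bar>G'' x\<bar> \<le> M"
  shows "\<bar>G (a + h) - G a - G' a * h\<bar> \<le> M * h\<^sup>2"
proof -
  define S where "S = {a - \<bar>h\<bar> .. a + \<bar>h\<bar>}"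
  have "0 \<le> M" using bound[of 0] by linarith
  have "norm ((G (a + h) - G' a * (a + h)) - (G a - G' a * a)) \<le> (M * \<bar>h\<bar>) * norm ((a + h) - a)"
  proof (rule field_differentiable_bound[of S])
    fix z assume z: "z \<in> S"
    show "((\<lambda>x. G x - G' a * x) has_field_derivative G' z - G' a) (at z within S)"
      by (auto intro!: derivative_eq_intros G'[THEN has_field_derivative_at_within])
    have "\<bar>G' z - G' a\<bar> \<le> M * \<bar>z - a\<bar>" by (rule Lipschitz_of_bounded_deriv[OF G'' bound])
    also have "\<dots> \<le> M * \<bar>h\<bar>" using z \<open>0 \<le> M\<close> by (intro mult_left_mono) (auto simp: S_def)
    finally show "norm (G' z - G' a) \<le> M * \<bar>h\<bar>" by simp
  qed (auto simp: S_def)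
  then show ?thesis by (simp add: algebra_simps power2_eq_square)
qed

definition admissible_nonlinearity :: "(real \<Rightarrow> real) \<Rightarrow> (real \<Rightarrow> real) \<Rightarrow> real \<Rightarrow> bool" where
  "admissible_nonlinearity G G' M \<longleftrightarrow> G 0 = 0 \<and> G' 0 = 0 \<and>
     (\<forall>x. (G has_real_derivative G' x) (at x)) \<and>
     (\<exists>G''. \<forall>x. (G' has_real_derivative G'' x) (at x) \<and> \<bar>G'' x\<bar> \<le> M)"

context
  fixes G G' :: "real \<Rightarrow> real" and M :: real
  assumes adm: "admissible_nonlinearity G G' M"
begin

lemma admissible_nonlinearity_nonneg: "0 \<le> M"
  using adm unfolding admissible_nonlinearity_def by force

lemma admissible_nonlinearity_continuous: "continuous_on UNIV G" "continuous_on UNIV G'"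
  using adm unfolding admissible_nonlinearity_def
  by (meson DERIV_isCont continuous_at_imp_continuous_on)+

lemma admissible_nonlinearity_remainder: "\<bar>G (a + h) - G a - G' a * h\<bar> \<le> M * h\<^sup>2"
  using adm second_order_remainder_bound unfolding admissible_nonlinearity_def by metis

lemma admissible_nonlinearity_deriv_bound: "\<bar>G' a\<bar> \<le> M * \<bar>a\<bar>"
proof -
  obtain G'' where "\<And>x. (G' has_real_derivative G'' x) (at x)" "\<And>x. \<bar>G'' x\<bar> \<le> M"
    using adm unfolding admissible_nonlinearity_def by blast
  then have "\<bar>G' a - G' 0\<bar> \<le> M * \<bar>a - 0\<bar>" by (rule Lipschitz_of_bounded_deriv)
  then show ?thesis using adm by (simp add: admissible_nonlinearity_def)
qed

lemma admissible_nonlinearity_bound: "\<bar>G a\<bar> \<le> M * a\<^sup>2"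
  using admissible_nonlinearity_remainder[of 0 a] adm unfolding admissible_nonlinearity_def by simp

end

section \<open>Integral functionals of Lagrangian type\<close>

lemma abs_mult_le_sum_squares: "\<bar>(x::real) * y\<bar> \<le> x\<^sup>2 + y\<^sup>2"
proof -
  have "2 * (\<bar>x\<bar> * \<bar>y\<bar>) \<le> x\<^sup>2 + y\<^sup>2"
    using sum_squares_bound[of "\<bar>x\<bar>" "\<bar>y\<bar>"] by (simp add: power2_abs mult.assoc)
  moreover have "0 \<le> \<bar>x\<bar> * \<bar>y\<bar>" by simp
  ultimately show ?thesis unfolding abs_mult by linarith
qed

lemma mult_le_square_mult_divide:
  fixes r R X :: real
  assumes "0 \<le> r" "r \<le> R" "0 \<le> X"
  shows "r * X \<le> R\<^sup>2 * (X / r)"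
proof (cases "r = 0")
  case False
  with assms have "r > 0" by simp
  then have "r * X = r\<^sup>2 * (X / r)" by (simp add: power2_eq_square)
  also have "\<dots> \<le> R\<^sup>2 * (X / r)"
    using assms \<open>r > 0\<close> by (intro mult_right_mono power_mono) auto
  finally show ?thesis .
qed simp

text \<open>The summand \<open>1\<close> dominates the kinetic term \<open>r u\<^sub>r\<^sup>2\<close>; the others absorb the remaining terms
  via \<open>r \<le> R\<^sup>2/r\<close>.\<close>

definition density_const :: "real \<Rightarrow> real \<Rightarrow> real \<Rightarrow> real \<Rightarrow> real" where
  "density_const c b M R = \<bar>c\<bar> + 2 * \<bar>b\<bar> * R\<^sup>2 + 2 * M * R\<^sup>2 + 1"

lemma density_const_pos: "0 \<le> M \<Longrightarrow> 0 < density_const c b M R"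
  unfolding density_const_def by (simp add: add_nonneg_pos)

lemma bilinear_density_bound:
  fixes r R c b M g u v uq vq :: real
  assumes r: "0 \<le> r" "r \<le> R" and M: "0 \<le> M" and g: "\<bar>g\<bar> \<le> M * \<bar>u\<bar>"
  shows "\<bar>r * v * vq + c / r * u * uq - 2 * b * r * u * uq + r * g * uq\<bar>
     \<le> density_const c b M R * ((r * v\<^sup>2 + u\<^sup>2 / r) + (r * vq\<^sup>2 + uq\<^sup>2 / r))"
proof -
  define U where "U = (u\<^sup>2 + uq\<^sup>2) / r"
  define V where "V = r * (v\<^sup>2 + vq\<^sup>2)"
  have U: "0 \<le> U" and V: "0 \<le> V" using r by (auto simp: U_def V_def)
  have uu: "\<bar>u * uq\<bar> \<le> u\<^sup>2 + uq\<^sup>2" by (rule abs_mult_le_sum_squares)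
  have rU: "r * \<bar>u * uq\<bar> \<le> R\<^sup>2 * U"
  proof -
    have "r * \<bar>u * uq\<bar> \<le> r * (u\<^sup>2 + uq\<^sup>2)" using uu r(1) by (rule mult_left_mono)
    also have "\<dots> \<le> R\<^sup>2 * U" unfolding U_def by (rule mult_le_square_mult_divide[OF r]) simp
    finally show ?thesis .
  qed
  have "\<bar>r * v * vq\<bar> \<le> V"
    using r mult_left_mono[OF abs_mult_le_sum_squares[of v vq] r(1)] by (simp add: V_def abs_mult)
  moreover have "\<bar>c / r * u * uq\<bar> \<le> \<bar>c\<bar> * U"
    using divide_right_mono[OF mult_left_mono[OF uu abs_ge_zero[of c]] r(1)] r
    by (simp add: U_def abs_mult mult.assoc)
  moreover have "\<bar>2 * b * r * u * uq\<bar> \<le> 2 * \<bar>b\<bar> * R\<^sup>2 * U"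
    using rU r by (simp add: abs_mult mult.assoc mult_left_mono)
  moreover have "\<bar>r * g * uq\<bar> \<le> M * R\<^sup>2 * U"
  proof -
    have "\<bar>r * g * uq\<bar> \<le> M * (r * \<bar>u * uq\<bar>)"
      using r g by (simp add: abs_mult mult_right_mono mult.assoc[symmetric] mult.commute[of r])
    also have "\<dots> \<le> M * R\<^sup>2 * U"
      using rU M by (simp add: mult.assoc mult_left_mono)
    finally show ?thesis .
  qed
  moreover have "0 \<le> (\<bar>c\<bar> + 2 * \<bar>b\<bar> * R\<^sup>2 + 2 * M * R\<^sup>2) * V" "0 \<le> (M * R\<^sup>2 + 1) * U"
    using U V M by simp_all
  moreover have "density_const c b M R * ((r * v\<^sup>2 + u\<^sup>2 / r) + (r * vq\<^sup>2 + uq\<^sup>2 / r))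
      = V + (\<bar>c\<bar> + 2 * \<bar>b\<bar> * R\<^sup>2 + 2 * M * R\<^sup>2) * V + \<bar>c\<bar> * U + 2 * \<bar>b\<bar> * R\<^sup>2 * U
        + M * R\<^sup>2 * U + (M * R\<^sup>2 + 1) * U"
    by (simp add: density_const_def U_def V_def algebra_simps add_divide_distrib)
  ultimately show ?thesis by (smt (verit))
qed

lemma quadratic_density_bound:
  fixes r R c b M d uq vq :: real
  assumes r: "0 \<le> r" "r \<le> R" and M: "0 \<le> M" and d: "\<bar>d\<bar> \<le> M * uq\<^sup>2"
  shows "\<bar>r * vq\<^sup>2 + c / r * uq\<^sup>2 - 2 * b * r * uq\<^sup>2 + 2 * r * d\<bar> \<le> density_const c b M R * (r * vq\<^sup>2 + uq\<^sup>2 / r)"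
proof -
  define U where "U = uq\<^sup>2 / r"
  define V where "V = r * vq\<^sup>2"
  have U: "0 \<le> U" and V: "0 \<le> V" using r by (auto simp: U_def V_def)
  have rU: "r * uq\<^sup>2 \<le> R\<^sup>2 * U" unfolding U_def by (rule mult_le_square_mult_divide[OF r]) simp
  have "\<bar>c / r * uq\<^sup>2\<bar> \<le> \<bar>c\<bar> * U" using r by (simp add: U_def abs_mult)
  moreover have "\<bar>2 * b * r * uq\<^sup>2\<bar> \<le> 2 * \<bar>b\<bar> * R\<^sup>2 * U"
    using rU r by (simp add: abs_mult mult.assoc mult_left_mono)
  moreover have "\<bar>2 * r * d\<bar> \<le> 2 * M * R\<^sup>2 * U"
  proof -
    have "\<bar>2 * r * d\<bar> \<le> 2 * M * (r * uq\<^sup>2)" using mult_left_mono[OF d r(1)] r by (simp add: abs_mult mult_ac)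
    also have "\<dots> \<le> 2 * M * R\<^sup>2 * U" using rU M by (simp add: mult.assoc mult_left_mono)
    finally show ?thesis .
  qed
  moreover have "\<bar>r * vq\<^sup>2\<bar> = V" using r by (simp add: V_def)
  moreover have "0 \<le> (\<bar>c\<bar> + 2 * \<bar>b\<bar> * R\<^sup>2 + 2 * M * R\<^sup>2) * V" "0 \<le> U" using U V M by simp_all
  moreover have "density_const c b M R * (r * vq\<^sup>2 + uq\<^sup>2 / r)
      = V + (\<bar>c\<bar> + 2 * \<bar>b\<bar> * R\<^sup>2 + 2 * M * R\<^sup>2) * V + \<bar>c\<bar> * U + 2 * \<bar>b\<bar> * R\<^sup>2 * U
        + 2 * M * R\<^sup>2 * U + U"
    by (simp add: density_const_def U_def V_def algebra_simps)
  ultimately show ?thesis by (smt (verit))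
qed

text \<open>\<open>I\<^sub>\<kappa>\<close> and \<open>\<gamma>\<^sub>\<kappa>\<close> are the actions with \<open>c = n\<^sup>2\<close>, \<open>b = 1/\<alpha> - \<kappa>\<close> and \<open>G = Nlog \<alpha>\<close>
  resp. \<open>Nrat \<alpha>\<close>.\<close>

definition lagrangian :: "real \<Rightarrow> real \<Rightarrow> (real \<Rightarrow> real) \<Rightarrow> hpt \<Rightarrow> real \<Rightarrow> real" where
  "lagrangian c b G p r = r * (snd p r)\<^sup>2 + c / r * (fst p r)\<^sup>2 - 2 * b * r * (fst p r)\<^sup>2
     + 2 * r * G (fst p r)"

definition lagrangian_deriv :: "real \<Rightarrow> real \<Rightarrow> (real \<Rightarrow> real) \<Rightarrow> hpt \<Rightarrow> hpt \<Rightarrow> real \<Rightarrow> real" where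
  "lagrangian_deriv c b G' p q r = r * snd p r * snd q r + c / r * fst p r * fst q r
     - 2 * b * r * fst p r * fst q r + r * G' (fst p r) * fst q r"

definition action :: "real \<Rightarrow> real \<Rightarrow> real \<Rightarrow> (real \<Rightarrow> real) \<Rightarrow> hpt \<Rightarrow> real" where
  "action c b R G p = 1/2 * integral {0..R} (lagrangian c b G p)"

definition action_deriv :: "real \<Rightarrow> real \<Rightarrow> real \<Rightarrow> (real \<Rightarrow> real) \<Rightarrow> hpt \<Rightarrow> hpt \<Rightarrow> real" where
  "action_deriv c b R G' p q = integral {0..R} (lagrangian_deriv c b G' p q)"

lemma dominated_integrable:
  fixes f g :: "real \<Rightarrow> real"
  assumes "f \<in> borel_measurable (lebesgue_on {0..R})" "g integrable_on {0..R}"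
    and "\<And>r. r \<in> {0..R} \<Longrightarrow> \<bar>f r\<bar> \<le> g r"
  shows "f integrable_on {0..R}" "\<bar>integral {0..R} f\<bar> \<le> integral {0..R} g"
proof -
  show f: "f integrable_on {0..R}"
    using measurable_bounded_by_integrable_imp_integrable[of f "{0..R}" g] assms by auto
  show "\<bar>integral {0..R} f\<bar> \<le> integral {0..R} g"
    using integral_norm_bound_integral[OF f assms(2)] assms(3) by simp
qed

lemmas measurable_arith =
  borel_measurable_add borel_measurable_diff borel_measurable_times borel_measurable_divide
  borel_measurable_power borel_measurable_const

lemma ident_borel_measurable_lebesgue_on: "(\<lambda>x::real. x) \<in> borel_measurable (lebesgue_on {0..R})"
  by (rule continuous_imp_measurable_on_sets_lebesgue[OF continuous_on_id]) simp

lemma lagrangian_measurable: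
  assumes p: "p \<in> Hsp R" and G: "continuous_on UNIV G"
  shows "lagrangian c b G p \<in> borel_measurable (lebesgue_on {0..R})"
  unfolding lagrangian_def
  by (rule measurable_arith ident_borel_measurable_lebesgue_on Hsp_measurable[OF p]
      measurable_compose[OF _ borel_measurable_continuous_onI[OF G]])+

lemma lagrangian_deriv_measurable:
  assumes p: "p \<in> Hsp R" and q: "q \<in> Hsp R" and G': "continuous_on UNIV G'"
  shows "lagrangian_deriv c b G' p q \<in> borel_measurable (lebesgue_on {0..R})"
  unfolding lagrangian_deriv_def
  by (rule measurable_arith ident_borel_measurable_lebesgue_on Hsp_measurable[OF p] Hsp_measurable[OF q]
      measurable_compose[OF _ borel_measurable_continuous_onI[OF G']])+

lemma lagrangian_deriv_pscale: "lagrangian_deriv c b G' p (pscale t q) r = t * lagrangian_deriv c b G' p q r"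
  by (simp add: lagrangian_deriv_def pscale_def algebra_simps)

lemma lagrangian_deriv_padd:
  "lagrangian_deriv c b G' p (padd q1 q2) r = lagrangian_deriv c b G' p q1 r + lagrangian_deriv c b G' p q2 r"
  by (simp add: lagrangian_deriv_def padd_def algebra_simps add_divide_distrib)

lemma lagrangian_padd:
  "lagrangian c b G (padd p q) r = lagrangian c b G p r + 2 * lagrangian_deriv c b G' p q r
     + (r * (snd q r)\<^sup>2 + c / r * (fst q r)\<^sup>2 - 2 * b * r * (fst q r)\<^sup>2
        + 2 * r * (G (fst p r + fst q r) - G (fst p r) - G' (fst p r) * fst q r))"
  by (simp add: lagrangian_def lagrangian_deriv_def padd_def power2_eq_square algebra_simps)

context
  fixes G G' :: "real \<Rightarrow> real" and M c b R :: real
  assumes adm: "admissible_nonlinearity G G' M"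
begin

lemma lagrangian_integrable:
  assumes p: "p \<in> Hsp R"
  shows "lagrangian c b G p integrable_on {0..R}"
proof (rule dominated_integrable)
  show "(\<lambda>r. density_const c b M R * Hdens p r) integrable_on {0..R}"
    by (rule integrable_on_mult_right[OF Hdens_integrable[OF p]])
  show "\<bar>lagrangian c b G p r\<bar> \<le> density_const c b M R * Hdens p r" if "r \<in> {0..R}" for r
    unfolding lagrangian_def Hdens_def using that
    by (intro quadratic_density_bound admissible_nonlinearity_nonneg[OF adm]
        admissible_nonlinearity_bound[OF adm]) auto
qed (rule lagrangian_measurable[OF p admissible_nonlinearity_continuous(1)[OF adm]])

lemma lagrangian_deriv_integrable:
  assumes p: "p \<in> Hsp R" and q: "q \<in> Hsp R"
  shows "lagrangian_deriv c b G' p q integrable_on {0..R}"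
    and "\<bar>action_deriv c b R G' p q\<bar> \<le> density_const c b M R * ((Hnorm R p)\<^sup>2 + (Hnorm R q)\<^sup>2)"
proof -
  let ?g = "\<lambda>r. density_const c b M R * (Hdens p r + Hdens q r)"
  have g: "?g integrable_on {0..R}"
    by (intro integrable_on_mult_right integrable_add Hdens_integrable p q)
  have "\<bar>lagrangian_deriv c b G' p q r\<bar> \<le> ?g r" if "r \<in> {0..R}" for r
    unfolding lagrangian_deriv_def Hdens_def using that
    by (intro bilinear_density_bound admissible_nonlinearity_nonneg[OF adm]
        admissible_nonlinearity_deriv_bound[OF adm]) auto
  note dom = dominated_integrable[OF lagrangian_deriv_measurable[OF p q
        admissible_nonlinearity_continuous(2)[OF adm]] g this]
  show "lagrangian_deriv c b G' p q integrable_on {0..R}" by (rule dom(1))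
  have "integral {0..R} (\<lambda>r. Hdens p r + Hdens q r) = (Hnorm R p)\<^sup>2 + (Hnorm R q)\<^sup>2"
    by (simp add: integral_add Hdens_integrable Hnorm_square p q)
  with dom(2) show "\<bar>action_deriv c b R G' p q\<bar> \<le> density_const c b M R * ((Hnorm R p)\<^sup>2 + (Hnorm R q)\<^sup>2)"
    unfolding action_deriv_def by simp
qed

lemma action_deriv_Hdual:
  assumes p: "p \<in> Hsp R"
  shows "Hdual R (action_deriv c b R G' p)"
proof -
  have "action_deriv c b R G' p (padd q1 q2) = action_deriv c b R G' p q1 + action_deriv c b R G' p q2"
    if "q1 \<in> Hsp R" "q2 \<in> Hsp R" for q1 q2
    unfolding action_deriv_def lagrangian_deriv_padd
    by (intro integral_add lagrangian_deriv_integrable(1) p that)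
  moreover have hom: "action_deriv c b R G' p (pscale t q) = t * action_deriv c b R G' p q" for t q
    unfolding action_deriv_def lagrangian_deriv_pscale by simp
  moreover have "\<exists>C. \<forall>q\<in>Hsp R. \<bar>action_deriv c b R G' p q\<bar> \<le> C * Hnorm R q"
    using lagrangian_deriv_integrable(2)[OF p]
    by (intro homogeneous_quadratic_bound_imp_bounded[OF hom,
        of _ "density_const c b M R * (Hnorm R p)\<^sup>2" "density_const c b M R"]) (simp add: distrib_left)
  ultimately show ?thesis unfolding Hdual_def by blast
qed

lemma action_remainder_bound:
  assumes p: "p \<in> Hsp R" and q: "q \<in> Hsp R"
  shows "\<bar>action c b R G (padd p q) - action c b R G p - action_deriv c b R G' p q\<bar>
    \<le> density_const c b M R / 2 * (Hnorm R q)\<^sup>2"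
proof -
  define \<rho> where "\<rho> r = r * (snd q r)\<^sup>2 + c / r * (fst q r)\<^sup>2 - 2 * b * r * (fst q r)\<^sup>2
      + 2 * r * (G (fst p r + fst q r) - G (fst p r) - G' (fst p r) * fst q r)" for r
  have meas: "\<rho> \<in> borel_measurable (lebesgue_on {0..R})"
    unfolding \<rho>_def
    by (rule measurable_arith ident_borel_measurable_lebesgue_on Hsp_measurable[OF p] Hsp_measurable[OF q]
        measurable_compose[OF _ borel_measurable_continuous_onI[OF admissible_nonlinearity_continuous(1)[OF adm]]]
        measurable_compose[OF _ borel_measurable_continuous_onI[OF admissible_nonlinearity_continuous(2)[OF adm]]])+
  have g: "(\<lambda>r. density_const c b M R * Hdens q r) integrable_on {0..R}"
    by (rule integrable_on_mult_right[OF Hdens_integrable[OF q]])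
  have bound: "\<bar>\<rho> r\<bar> \<le> density_const c b M R * Hdens q r" if "r \<in> {0..R}" for r
    unfolding \<rho>_def Hdens_def using that
    by (intro quadratic_density_bound admissible_nonlinearity_nonneg[OF adm]
        admissible_nonlinearity_remainder[OF adm]) auto
  note \<rho> = dominated_integrable[OF meas g bound]
  have "\<bar>integral {0..R} \<rho>\<bar> \<le> density_const c b M R * (Hnorm R q)\<^sup>2"
    using \<rho>(2) Hdens_integrable[OF q] by (simp add: Hnorm_square[OF q])
  \<comment> \<open>This decomposition also gives integrability at p + q.\<close>
  have "lagrangian c b G (padd p q) = (\<lambda>r. lagrangian c b G p r + 2 * lagrangian_deriv c b G' p q r + \<rho> r)"
    unfolding \<rho>_def by (rule ext) (rule lagrangian_padd)
  then have "integral {0..R} (lagrangian c b G (padd p q))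
      = integral {0..R} (lagrangian c b G p) + 2 * action_deriv c b R G' p q + integral {0..R} \<rho>"
    using lagrangian_integrable[OF p] lagrangian_deriv_integrable(1)[OF p q] \<rho>(1)
    by (simp add: integral_add integrable_add action_deriv_def)
  then have remainder: "2 * (action c b R G (padd p q) - action c b R G p - action_deriv c b R G' p q)
      = integral {0..R} \<rho>"
    unfolding action_def by (simp add: algebra_simps)
  have "\<bar>integral {0..R} \<rho>\<bar> = 2 * \<bar>action c b R G (padd p q) - action c b R G p - action_deriv c b R G' p q\<bar>"
    unfolding remainder[symmetric] by (subst abs_mult) simp
  with \<open>\<bar>integral {0..R} \<rho>\<bar> \<le> _\<close> show ?thesis by (simp add: field_simps)
qed

lemma has_H_deriv_action:
  assumes "p \<in> Hsp R"
  shows "has_H_deriv R (action c b R G) p (action_deriv c b R G' p)"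
  using action_remainder_bound[OF assms] density_const_pos[OF admissible_nonlinearity_nonneg[OF adm], of c b R]
  by (intro quadratic_remainder_imp_has_H_deriv[where C = "density_const c b M R / 2"]
      action_deriv_Hdual assms) auto

end

section \<open>The two nonlinearities of the problem\<close>

definition Nlog :: "real \<Rightarrow> real \<Rightarrow> real" where
  "Nlog \<alpha> s = \<alpha> powi (-2) * ln (1 + \<alpha> * s\<^sup>2)"

definition Nlog' :: "real \<Rightarrow> real \<Rightarrow> real" where
  "Nlog' \<alpha> s = 2 * s / (\<alpha> * (1 + \<alpha> * s\<^sup>2))"

definition Nrat :: "real \<Rightarrow> real \<Rightarrow> real" where
  "Nrat \<alpha> s = 1 / \<alpha> * s\<^sup>2 / (1 + \<alpha> * s\<^sup>2)"

definition Nrat' :: "real \<Rightarrow> real \<Rightarrow> real" where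
  "Nrat' \<alpha> s = 2 * s / (\<alpha> * (1 + \<alpha> * s\<^sup>2)\<^sup>2)"

lemma one_plus_mult_square_pos: "(\<alpha>::real) > 0 \<Longrightarrow> 0 < 1 + \<alpha> * s\<^sup>2"
  by (simp add: add_pos_nonneg)

lemma Nlog_has_derivative:
  fixes \<alpha> x :: real assumes a: "\<alpha> > 0"
  shows "(Nlog \<alpha> has_real_derivative Nlog' \<alpha> x) (at x)"
proof -
  have p: "1 + \<alpha> * x\<^sup>2 > 0" by (rule one_plus_mult_square_pos[OF a])
  show ?thesis unfolding Nlog_def[abs_def] Nlog'_def power_int_minus
    by (rule derivative_eq_intros refl | use p a in \<open>simp add: field_simps power2_eq_square\<close>)+
qed

lemma Nrat_has_derivative:
  fixes \<alpha> x :: real assumes a: "\<alpha> > 0"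
  shows "(Nrat \<alpha> has_real_derivative Nrat' \<alpha> x) (at x)"
proof -
  have p: "1 + \<alpha> * x\<^sup>2 > 0" by (rule one_plus_mult_square_pos[OF a])
  show ?thesis unfolding Nrat_def[abs_def] Nrat'_def
    by (rule derivative_eq_intros refl | use p a in \<open>simp add: field_simps power2_eq_square\<close>)+
qed

lemma Nlog'_has_derivative:
  fixes \<alpha> x :: real assumes a: "\<alpha> > 0"
  shows "(Nlog' \<alpha> has_real_derivative 2 * (1 - \<alpha> * x\<^sup>2) / (\<alpha> * (1 + \<alpha> * x\<^sup>2)\<^sup>2)) (at x)"
proof -
  define y where "y = 1 + \<alpha> * x\<^sup>2"
  have y: "y > 0" unfolding y_def by (rule one_plus_mult_square_pos[OF a])
  have num: "((\<lambda>s. 2 * s) has_real_derivative 2) (at x)" by (auto intro!: derivative_eq_intros)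
  have den: "((\<lambda>s. \<alpha> * (1 + \<alpha> * s\<^sup>2)) has_real_derivative \<alpha> * (\<alpha> * (2 * x))) (at x)"
    by (auto intro!: derivative_eq_intros)
  have "(2 * (\<alpha> * y) - 2 * x * (\<alpha> * (\<alpha> * (2 * x)))) / (\<alpha> * y * (\<alpha> * y))
      = 2 * (y - 2 * \<alpha> * x\<^sup>2) / (\<alpha> * y\<^sup>2)"
    using a y by (simp add: field_simps power2_eq_square)
  also have "y - 2 * \<alpha> * x\<^sup>2 = 1 - \<alpha> * x\<^sup>2" by (simp add: y_def)
  finally show ?thesis
    using DERIV_divide[OF num den] a y unfolding Nlog'_def[abs_def] y_def by simp
qed

lemma Nrat'_has_derivative:
  fixes \<alpha> x :: real assumes a: "\<alpha> > 0"
  shows "(Nrat' \<alpha> has_real_derivative 2 * (1 - 3 * \<alpha> * x\<^sup>2) / (\<alpha> * (1 + \<alpha> * x\<^sup>2) ^ 3)) (at x)"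
proof -
  define y where "y = 1 + \<alpha> * x\<^sup>2"
  have y: "y > 0" unfolding y_def by (rule one_plus_mult_square_pos[OF a])
  have num: "((\<lambda>s. 2 * s) has_real_derivative 2) (at x)" by (auto intro!: derivative_eq_intros)
  have den: "((\<lambda>s. \<alpha> * (1 + \<alpha> * s\<^sup>2)\<^sup>2) has_real_derivative \<alpha> * (2 * (1 + \<alpha> * x\<^sup>2) * (\<alpha> * (2 * x)))) (at x)"
    by (auto intro!: derivative_eq_intros)
  have "(2 * (\<alpha> * y\<^sup>2) - 2 * x * (\<alpha> * (2 * y * (\<alpha> * (2 * x))))) / (\<alpha> * y\<^sup>2 * (\<alpha> * y\<^sup>2))
      = 2 * (y - 4 * \<alpha> * x\<^sup>2) / (\<alpha> * y ^ 3)"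
    using a y by (simp add: field_simps power2_eq_square power3_eq_cube)
  also have "y - 4 * \<alpha> * x\<^sup>2 = 1 - 3 * \<alpha> * x\<^sup>2" by (simp add: y_def)
  finally show ?thesis
    using DERIV_divide[OF num den] a y unfolding Nrat'_def[abs_def] y_def by simp
qed

lemma Nlog''_bound:
  fixes \<alpha> x :: real assumes a: "\<alpha> > 0"
  shows "\<bar>2 * (1 - \<alpha> * x\<^sup>2) / (\<alpha> * (1 + \<alpha> * x\<^sup>2)\<^sup>2)\<bar> \<le> 2 / \<alpha>"
proof -
  define y where "y = 1 + \<alpha> * x\<^sup>2"
  have y: "1 \<le> y" using a by (simp add: y_def)
  have "\<bar>1 - \<alpha> * x\<^sup>2\<bar> \<le> y" using a by (simp add: y_def abs_le_iff)
  also have "y \<le> y\<^sup>2" using power_increasing[of 1 2 y] y by simp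
  finally have "\<bar>1 - \<alpha> * x\<^sup>2\<bar> / y\<^sup>2 \<le> 1" using y by simp
  then have "2 / \<alpha> * (\<bar>1 - \<alpha> * x\<^sup>2\<bar> / y\<^sup>2) \<le> 2 / \<alpha> * 1"
    using a by (intro mult_left_mono) auto
  moreover have "\<bar>2 * (1 - \<alpha> * x\<^sup>2) / (\<alpha> * y\<^sup>2)\<bar> = 2 / \<alpha> * (\<bar>1 - \<alpha> * x\<^sup>2\<bar> / y\<^sup>2)"
    using a y by (subst abs_divide, subst abs_mult) simp
  ultimately show ?thesis unfolding y_def by simp
qed

lemma Nrat''_bound:
  fixes \<alpha> x :: real assumes a: "\<alpha> > 0"
  shows "\<bar>2 * (1 - 3 * \<alpha> * x\<^sup>2) / (\<alpha> * (1 + \<alpha> * x\<^sup>2) ^ 3)\<bar> \<le> 6 / \<alpha>"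
proof -
  define y where "y = 1 + \<alpha> * x\<^sup>2"
  have y: "1 \<le> y" using a by (simp add: y_def)
  have "\<bar>1 - 3 * \<alpha> * x\<^sup>2\<bar> \<le> 3 * y" using a by (simp add: y_def abs_le_iff)
  also have "3 * y \<le> 3 * y ^ 3" using power_increasing[of 1 3 y] y by simp
  finally have "\<bar>1 - 3 * \<alpha> * x\<^sup>2\<bar> / y ^ 3 \<le> 3" using y by (simp add: divide_le_eq)
  then have "2 / \<alpha> * (\<bar>1 - 3 * \<alpha> * x\<^sup>2\<bar> / y ^ 3) \<le> 2 / \<alpha> * 3"
    using a by (intro mult_left_mono) auto
  moreover have "\<bar>2 * (1 - 3 * \<alpha> * x\<^sup>2) / (\<alpha> * y ^ 3)\<bar> = 2 / \<alpha> * (\<bar>1 - 3 * \<alpha> * x\<^sup>2\<bar> / y ^ 3)"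
    using a y by (subst abs_divide, subst abs_mult) simp
  ultimately show ?thesis unfolding y_def by simp
qed

lemma admissible_Nlog:
  assumes "\<alpha> > 0" shows "admissible_nonlinearity (Nlog \<alpha>) (Nlog' \<alpha>) (2 / \<alpha>)"
proof -
  have "\<forall>x. (Nlog' \<alpha> has_real_derivative 2 * (1 - \<alpha> * x\<^sup>2) / (\<alpha> * (1 + \<alpha> * x\<^sup>2)\<^sup>2)) (at x) \<and>
      \<bar>2 * (1 - \<alpha> * x\<^sup>2) / (\<alpha> * (1 + \<alpha> * x\<^sup>2)\<^sup>2)\<bar> \<le> 2 / \<alpha>"
    using Nlog'_has_derivative[OF assms] Nlog''_bound[OF assms] by blast
  then show ?thesis unfolding admissible_nonlinearity_def
    using Nlog_has_derivative[OF assms] by (auto simp: Nlog_def Nlog'_def)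
qed

lemma admissible_Nrat:
  assumes "\<alpha> > 0" shows "admissible_nonlinearity (Nrat \<alpha>) (Nrat' \<alpha>) (6 / \<alpha>)"
proof -
  have "\<forall>x. (Nrat' \<alpha> has_real_derivative 2 * (1 - 3 * \<alpha> * x\<^sup>2) / (\<alpha> * (1 + \<alpha> * x\<^sup>2) ^ 3)) (at x) \<and>
      \<bar>2 * (1 - 3 * \<alpha> * x\<^sup>2) / (\<alpha> * (1 + \<alpha> * x\<^sup>2) ^ 3)\<bar> \<le> 6 / \<alpha>"
    using Nrat'_has_derivative[OF assms] Nrat''_bound[OF assms] by blast
  then show ?thesis unfolding admissible_nonlinearity_def
    using Nrat_has_derivative[OF assms] by (auto simp: Nrat_def Nrat'_def)
qed

section \<open>The Nehari manifold\<close>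

lemma lagrangian_deriv_self:
  assumes "\<And>s. G' s * s = 2 * H s"
  shows "lagrangian_deriv c b G' p p = lagrangian c b H p"
  unfolding lagrangian_deriv_def lagrangian_def fun_eq_iff
  using assms by (simp add: power2_eq_square algebra_simps)

lemma Nlog'_mult_self: "\<alpha> > 0 \<Longrightarrow> Nlog' \<alpha> s * s = 2 * Nrat \<alpha> s"
  by (simp add: Nlog'_def Nrat_def power2_eq_square)

lemma Nrat_defect: "\<alpha> > 0 \<Longrightarrow> 2 * Nrat \<alpha> s - Nrat' \<alpha> s * s = 2 * s ^ 4 / (1 + \<alpha> * s\<^sup>2)\<^sup>2"
proof -
  assume a: "\<alpha> > 0"
  define y where "y = 1 + \<alpha> * s\<^sup>2"
  have y: "y > 0" unfolding y_def by (rule one_plus_mult_square_pos[OF a])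
  have "2 * Nrat \<alpha> s - Nrat' \<alpha> s * s = 2 * s\<^sup>2 * (y - 1) / (\<alpha> * y\<^sup>2)"
    unfolding Nrat_def Nrat'_def y_def[symmetric] using a y by (simp add: field_simps power2_eq_square)
  also have "\<dots> = \<alpha> * (2 * s ^ 4) / (\<alpha> * y\<^sup>2)"
    by (simp add: y_def power2_eq_square power4_eq_xxxx mult_ac)
  also have "\<dots> = 2 * s ^ 4 / y\<^sup>2" using a by simp
  finally show ?thesis by (simp add: y_def)
qed

lemma integral_nonneg_eq_0_imp_ae_zero:
  fixes f :: "real \<Rightarrow> real"
  assumes f: "f integrable_on {0..R}" and nonneg: "\<And>r. r \<in> {0..R} \<Longrightarrow> 0 \<le> f r"
    and zero: "integral {0..R} f = 0"
  obtains N where "negligible N" "\<And>r. r \<in> {0..R} - N \<Longrightarrow> f r = 0"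
proof -
  have S: "{0..R} \<in> sets lebesgue" by simp
  have L: "integrable (lebesgue_on {0..R}) f"
    using absolutely_integrable_imp_integrable[OF nonnegative_absolutely_integrable_1[OF f nonneg] S] .
  have "integral\<^sup>L (lebesgue_on {0..R}) f = 0" using lebesgue_integral_eq_integral[OF L S] zero by simp
  moreover have "AE x in lebesgue_on {0..R}. 0 \<le> f x" by (rule AE_I2) (use nonneg in auto)
  ultimately have "AE x in lebesgue_on {0..R}. f x = 0" using integral_nonneg_eq_0_iff_AE[OF L] by blast
  then obtain N where N: "N \<in> null_sets (lebesgue_on {0..R})"
    and NN: "{x \<in> space (lebesgue_on {0..R}). f x \<noteq> 0} \<subseteq> N"
    unfolding eventually_ae_filter by blast
  show thesis
  proof
    show "negligible N" using N S by (auto simp: null_sets_restrict_space negligible_iff_null_sets)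
    show "f r = 0" if "r \<in> {0..R} - N" for r using NN that by auto
  qed
qed

lemma action_deriv_Nrat_self_nonzero:
  assumes a: "\<alpha> > 0" and u: "u \<in> Hsp R"
    and nehari: "action c b R (Nrat \<alpha>) u = 0" and nontrivial: "Hnorm R u \<noteq> 0"
  shows "action_deriv c b R (Nrat' \<alpha>) u u \<noteq> 0"
proof
  assume deriv0: "action_deriv c b R (Nrat' \<alpha>) u u = 0"
  define \<phi> where "\<phi> r = lagrangian c b (Nrat \<alpha>) u r - lagrangian_deriv c b (Nrat' \<alpha>) u u r" for r
  have \<phi>_eq: "\<phi> r = r * (2 * (fst u r) ^ 4 / (1 + \<alpha> * (fst u r)\<^sup>2)\<^sup>2)" for r
    unfolding \<phi>_def lagrangian_def lagrangian_deriv_def Nrat_defect[OF a, symmetric]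
    by (simp add: algebra_simps power2_eq_square)
  have \<phi>_int: "\<phi> integrable_on {0..R}"
    unfolding \<phi>_def[abs_def] using admissible_Nrat[OF a]
    by (intro integrable_diff lagrangian_integrable lagrangian_deriv_integrable(1) u)
  have "integral {0..R} \<phi> = 2 * action c b R (Nrat \<alpha>) u - action_deriv c b R (Nrat' \<alpha>) u u"
    unfolding \<phi>_def[abs_def] action_def action_deriv_def using admissible_Nrat[OF a]
    by (simp add: integral_diff lagrangian_integrable lagrangian_deriv_integrable(1) u)
  with nehari deriv0 have "integral {0..R} \<phi> = 0" by simp
  then obtain N where N: "negligible N" and \<phi>0: "\<And>r. r \<in> {0..R} - N \<Longrightarrow> \<phi> r = 0"
    using integral_nonneg_eq_0_imp_ae_zero[OF \<phi>_int] by (auto simp: \<phi>_eq)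
  have u0: "fst u r = 0" if "r \<in> {0..R} - (N \<union> {0})" for r
    using \<phi>0[of r] that one_plus_mult_square_pos[OF a, of "fst u r"] by (auto simp: \<phi>_eq)
  have "integral {0..R} (lagrangian c b (Nrat \<alpha>) u) = integral {0..R} (Hdens u)"
    using N by (intro integral_spike[of "N \<union> {0}"]) (auto simp: lagrangian_def Hdens_def Nrat_def u0)
  then have "(Hnorm R u)\<^sup>2 = 0" using nehari by (simp add: Hnorm_square[OF u] action_def)
  with nontrivial show False by simp
qed

lemma Nehari_critical_iff:
  assumes u: "u \<in> Hsp R" and M: "u \<in> M \<longleftrightarrow> Hnorm R u \<noteq> 0 \<and> G u = 0"
    and F': "has_H_deriv R F u L" and G': "has_H_deriv R G u K"
    and Nehari_identity: "L u = 2 * G u"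
    and transversal: "G u = 0 \<Longrightarrow> Hnorm R u \<noteq> 0 \<Longrightarrow> K u \<noteq> 0"
  shows "(H_critical R F u \<and> Hnorm R u \<noteq> 0) \<longleftrightarrow> (u \<in> M \<and> M_critical R M F G u)"
proof
  assume crit: "H_critical R F u \<and> Hnorm R u \<noteq> 0"
  then obtain L0 where L0: "has_H_deriv R F u L0" "\<forall>q\<in>Hsp R. L0 q = 0"
    unfolding H_critical_def by blast
  then have "G u = 0" using has_H_deriv_unique[OF L0(1) F' u] Nehari_identity u by simp
  with crit M have "u \<in> M" by simp
  with L0 G' show "u \<in> M \<and> M_critical R M F G u"
    unfolding M_critical_def by (metis mult_zero_left)
next
  assume "u \<in> M \<and> M_critical R M F G u"
  then obtain L1 K1 \<xi> where M1: "u \<in> M" and L1: "has_H_deriv R F u L1" and K1: "has_H_deriv R G u K1"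
    and multiplier: "\<forall>q\<in>Hsp R. L1 q = \<xi> * K1 q"
    unfolding M_critical_def by blast
  from M1 M have nontrivial: "Hnorm R u \<noteq> 0" and G0: "G u = 0" by auto
  have "\<xi> * K u = 0"
    using multiplier u has_H_deriv_unique[OF L1 F' u] has_H_deriv_unique[OF K1 G' u] Nehari_identity G0
    by simp
  then have "\<xi> = 0" using transversal[OF G0 nontrivial] by simp
  then show "H_critical R F u \<and> Hnorm R u \<noteq> 0"
    unfolding H_critical_def using u L1 multiplier nontrivial by auto
qed

theorem lemma4p1:
  fixes n :: int and \<alpha> R \<kappa> :: real and u :: hpt
  assumes "\<bar>n\<bar> \<ge> 1" and "\<alpha> > 0" and "R > 0" and "u \<in> Hsp R"
  shows "(H_critical R (Ikappa n \<alpha> \<kappa> R) u \<and> Hnorm R u \<noteq> 0) \<longleftrightarrow>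
         (u \<in> Nehari n \<alpha> \<kappa> R \<and>
          M_critical R (Nehari n \<alpha> \<kappa> R) (Ikappa n \<alpha> \<kappa> R) (gammak n \<alpha> \<kappa> R) u)"
proof -
  note a = \<open>\<alpha> > 0\<close> and u = \<open>u \<in> Hsp R\<close>
  define c where "c = (real_of_int n)\<^sup>2"
  define b where "b = 1 / \<alpha> - \<kappa>"
  have I: "Ikappa n \<alpha> \<kappa> R = action c b R (Nlog \<alpha>)"
    unfolding fun_eq_iff Ikappa_def action_def lagrangian_def[abs_def] Nlog_def c_def b_def by (simp add: mult_ac)
  have \<gamma>: "gammak n \<alpha> \<kappa> R = action c b R (Nrat \<alpha>)"
    unfolding fun_eq_iff gammak_def action_def lagrangian_def[abs_def] Nrat_def c_def b_def by (simp add: mult_ac)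
  show ?thesis unfolding I \<gamma>
  proof (rule Nehari_critical_iff[OF u, where L = "action_deriv c b R (Nlog' \<alpha>) u"
        and K = "action_deriv c b R (Nrat' \<alpha>) u"])
    show "u \<in> Nehari n \<alpha> \<kappa> R \<longleftrightarrow> Hnorm R u \<noteq> 0 \<and> action c b R (Nrat \<alpha>) u = 0"
      by (simp add: Nehari_def u \<gamma>)
    show "has_H_deriv R (action c b R (Nlog \<alpha>)) u (action_deriv c b R (Nlog' \<alpha>) u)"
      by (rule has_H_deriv_action[OF admissible_Nlog[OF a] u])
    show "has_H_deriv R (action c b R (Nrat \<alpha>)) u (action_deriv c b R (Nrat' \<alpha>) u)"
      by (rule has_H_deriv_action[OF admissible_Nrat[OF a] u])
    show "action_deriv c b R (Nlog' \<alpha>) u u = 2 * action c b R (Nrat \<alpha>) u"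
      unfolding action_deriv_def action_def lagrangian_deriv_self[OF Nlog'_mult_self[OF a]] by simp
  qed (rule action_deriv_Nrat_self_nonzero[OF a u])
qed

end
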